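(* Let ${\mathbf{X}}^{({\mathbf{A}})}_1,\dots,{\mathbf{X}}^{({\mathbf{A}})}_s,{\mathbf{X}}^{({\mathbf{B}})}_1,\dots,{\mathbf{X}}^{({\mathbf{B}})}_t\in\mathbb{R}^{m\times n}$, ${\mathbf{A}}_i\in\mathbb{R}^{k_i\times m}$ ($i=1,\dots,s$), ${\mathbf{B}}_j\in\mathbb{R}^{n\times \ell_j}$ ($j=1,\dots,t$), and consider $$F({\mathbf{U}},{\mathbf{V}})=\frac12\sum_{i=1}^s\|{\mathbf{A}}_i({\mathbf{X}}^{({\mathbf{A}})}_i-{\mathbf{U}}{\mathbf{V}}^T)\|_F^2+\frac12\sum_{j=1}^t\|({\mathbf{X}}^{({\mathbf{B}})}_j-{\mathbf{U}}{\mathbf{V}}^T){\mathbf{B}}_j\|_F^2$$ for ${\mathbf{U}}\in\mathbb{R}^{m\times r},{\mathbf{V}}\in\mathbb{R}^{n\times r}$. Suppose the six matrices ${\mathbf{U}}$, ${\mathbf{V}}$, $\sum_i{\mathbf{A}}_i^T{\mathbf{A}}_i$, $\sum_j{\mathbf{B}}_j{\mathbf{B}}_j^T$, $\sum_i{\mathbf{A}}_i^T{\mathbf{A}}_i{\mathbf{X}}^{({\mathbf{A}})}_i$, $\sum_j{\mathbf{X}}^{({\mathbf{B}})}_j{\mathbf{B}}_j{\mathbf{B}}_j^T$ are entrywise nonnegative, and that the denominators below are entrywise positive. Define $${\mathbf{U}}'={\mathbf{U}}\circ\frac{\sum_i{\mathbf{A}}_i^T{\mathbf{A}}_i{\mathbf{X}}^{({\mathbf{A}})}_i{\mathbf{V}}+\sum_j{\mathbf{X}}^{({\mathbf{B}})}_j{\mathbf{B}}_j{\mathbf{B}}_j^T{\mathbf{V}}}{\sum_i{\mathbf{A}}_i^T{\mathbf{A}}_i{\mathbf{U}}{\mathbf{V}}^T{\mathbf{V}}+\sum_j{\mathbf{U}}{\mathbf{V}}^T{\mathbf{B}}_j{\mathbf{B}}_j^T{\mathbf{V}}},\qquad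 {\mathbf{V}}'={\mathbf{V}}\circ\frac{\sum_i({\mathbf{X}}^{({\mathbf{A}})}_i)^T{\mathbf{A}}_i^T{\mathbf{A}}_i{\mathbf{U}}+\sum_j{\mathbf{B}}_j{\mathbf{B}}_j^T({\mathbf{X}}^{({\mathbf{B}})}_j)^T{\mathbf{U}}}{\sum_i{\mathbf{V}}{\mathbf{U}}^T{\mathbf{A}}_i^T{\mathbf{A}}_i{\mathbf{U}}+\sum_j{\mathbf{B}}_j{\mathbf{B}}_j^T{\mathbf{V}}{\mathbf{U}}^T{\mathbf{U}}}.$$ Then ${\mathbf{U}}'$ and ${\mathbf{V}}'$ are entrywise nonnegative, $F({\mathbf{U}}',{\mathbf{V}})\le F({\mathbf{U}},{\mathbf{V}})$ and $F({\mathbf{U}},{\mathbf{V}}')\le F({\mathbf{U}},{\mathbf{V}})$. In particular, $F$ is nonincreasing along the alternating iterations that apply these updates in turn.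
   Context: $\circ$ denotes entrywise (Hadamard) product and the fraction bar denotes entrywise division. $\|\cdot\|_F$ is the Frobenius norm. *)

theory Defs
  imports "Jordan_Normal_Form.Matrix"
begin

definition msum :: "nat \<Rightarrow> nat \<Rightarrow> nat \<Rightarrow> (nat \<Rightarrow> real mat) \<Rightarrow> real mat" where
  "msum d1 d2 N f = mat d1 d2 (\<lambda>(a,b). \<Sum>i<N. f i $$ (a,b))"

definition hadamard :: "real mat \<Rightarrow> real mat \<Rightarrow> real mat" where
  "hadamard M N = mat (dim_row M) (dim_col M) (\<lambda>(i,j). M $$ (i,j) * N $$ (i,j))"

definition hdiv :: "real mat \<Rightarrow> real mat \<Rightarrow> real mat" where
  "hdiv M N = mat (dim_row M) (dim_col M) (\<lambda>(i,j). M $$ (i,j) / N $$ (i,j))"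

definition frob :: "real mat \<Rightarrow> real" where
  "frob M = sqrt (\<Sum>i<dim_row M. \<Sum>j<dim_col M. (M $$ (i,j))\<^sup>2)"

definition nonneg_mat :: "real mat \<Rightarrow> bool" where
  "nonneg_mat M \<longleftrightarrow> (\<forall>i<dim_row M. \<forall>j<dim_col M. M $$ (i,j) \<ge> 0)"

definition pos_mat :: "real mat \<Rightarrow> bool" where
  "pos_mat M \<longleftrightarrow> (\<forall>i<dim_row M. \<forall>j<dim_col M. M $$ (i,j) > 0)"

text \<open>The objective F(U,V); indices i range over 0..s-1 and j over 0..t-1.\<close>
definition objF :: "nat \<Rightarrow> nat \<Rightarrow> (nat \<Rightarrow> real mat) \<Rightarrow> (nat \<Rightarrow> real mat) \<Rightarrow>
    (nat \<Rightarrow> real mat) \<Rightarrow> (nat \<Rightarrow> real mat) \<Rightarrow> real mat \<Rightarrow> real mat \<Rightarrow> real" where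
  "objF s t XA XB A B U V =
     (1/2) * (\<Sum>i<s. (frob (A i * (XA i - U * transpose_mat V)))\<^sup>2)
   + (1/2) * (\<Sum>j<t. (frob ((XB j - U * transpose_mat V) * B j))\<^sup>2)"

end

theory Submission
  imports Defs
begin

text \<open>
  Both updates are majorize-minimize steps in the style of Lee and Seung. For fixed \<open>V\<close>,
  \<open>F(U + \<Delta>, V) = F(U, V) + \<langle>D - N, \<Delta>\<rangle> + \<langle>P \<Delta> V\<^sup>T V + \<Delta> V\<^sup>T Q V, \<Delta>\<rangle> / 2\<close>,
  where \<open>N\<close> and \<open>D\<close> are the numerator and denominator of the \<open>U\<close>-update,
  \<open>P = \<Sum> A\<^sub>i\<^sup>T A\<^sub>i\<close>, \<open>Q = \<Sum> B\<^sub>j B\<^sub>j\<^sup>T\<close>, and \<open>D = P U V\<^sup>T V + U V\<^sup>T Q V\<close>.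
  Since \<open>P\<close>, \<open>Q\<close>, \<open>U\<close>, \<open>V\<close> are nonnegative and \<open>P\<close>, \<open>V\<^sup>T V\<close>, \<open>V\<^sup>T Q V\<close> are symmetric,
  \<open>2xy \<le> x\<^sup>2 + y\<^sup>2\<close> bounds the quadratic term at \<open>\<Delta> = U \<circ> w\<close> by \<open>\<Sum> D U w\<^sup>2\<close>.
  For \<open>w = N / D - 1\<close>, i.e. \<open>U + \<Delta> = U'\<close>, the linear term equals \<open>-\<Sum> D U w\<^sup>2\<close>, hence
  \<open>F(U', V) \<le> F(U, V) - \<Sum> D U w\<^sup>2 / 2\<close>. Transposing every residual exchanges the roles of
  \<open>U\<close> and \<open>V\<close> (with data \<open>B\<^sub>j\<^sup>T\<close>, \<open>A\<^sub>i\<^sup>T\<close> and transposed targets), and turns the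
  \<open>V\<close>-update into a \<open>U\<close>-update.
\<close>

lemma mult_mat_assoc:
  fixes A B C :: "'a::semiring_0 mat"
  assumes "dim_col A = dim_row B" "dim_col B = dim_row C"
  shows "A * B * C = A * (B * C)"
  using assms by (intro assoc_mult_mat carrier_matI) simp_all

lemma mult_mat_diff_right:
  fixes A B C :: "'a::ring mat"
  assumes "dim_col A = dim_row B" "dim_row C = dim_row B" "dim_col C = dim_col B"
  shows "A * (B - C) = A * B - A * C"
  using assms by (intro mult_minus_distrib_mat carrier_matI) simp_all

lemma mult_mat_diff_left:
  fixes A B C :: "'a::ring mat"
  assumes "dim_row C = dim_col A" "dim_row B = dim_row A" "dim_col B = dim_col A"
  shows "(A - B) * C = A * C - B * C"
  using assms by (intro minus_mult_distrib_mat carrier_matI) simp_all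

lemma mult_mat_add_right:
  fixes A B C :: "'a::semiring_0 mat"
  assumes "dim_col A = dim_row B" "dim_row C = dim_row B" "dim_col C = dim_col B"
  shows "A * (B + C) = A * B + A * C"
  using assms by (intro mult_add_distrib_mat carrier_matI) simp_all

lemma mult_mat_add_left:
  fixes A B C :: "'a::semiring_0 mat"
  assumes "dim_row C = dim_col A" "dim_row B = dim_row A" "dim_col B = dim_col A"
  shows "(A + B) * C = A * C + B * C"
  using assms by (intro add_mult_distrib_mat carrier_matI) simp_all

lemma diff_add_mat:
  fixes A B C :: "'a::ab_group_add mat"
  assumes "dim_row B = dim_row A" "dim_col B = dim_col A" "dim_row C = dim_row A" "dim_col C = dim_col A"
  shows "A - (B + C) = A - B - C"
  using assms by (intro eq_matI) auto

lemma transpose_mult_mat: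
  fixes A B :: "'a::comm_semiring_0 mat"
  assumes "dim_col A = dim_row B"
  shows "transpose_mat (A * B) = transpose_mat B * transpose_mat A"
  using assms by (intro transpose_mult carrier_matI) simp_all

lemma transpose_diff_mat:
  fixes A B :: "'a::ab_group_add mat"
  assumes "dim_row B = dim_row A" "dim_col B = dim_col A"
  shows "transpose_mat (A - B) = transpose_mat A - transpose_mat B"
  using assms by (intro transpose_minus carrier_matI) simp_all

text \<open>The library states these laws with carrier premises whose intermediate dimensions the
  simplifier cannot guess; with dimension equations as side conditions it normalises matrix
  expressions (products associated to the right) once the carriers of the atoms are known.\<close>
lemmas mat_ring_simps = mult_mat_assoc mult_mat_diff_right mult_mat_diff_left
  mult_mat_add_right mult_mat_add_left diff_add_mat transpose_mult_mat transpose_diff_mat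

lemma index_mult_mat_sum:
  assumes "A \<in> carrier_mat p q" "B \<in> carrier_mat q r" "i < p" "j < r"
  shows "(A * B) $$ (i,j) = (\<Sum>k<q. A $$ (i,k) * B $$ (k,j))"
  using assms by (auto simp: scalar_prod_def lessThan_atLeast0 intro!: sum.cong)

definition frob_inner :: "real mat \<Rightarrow> real mat \<Rightarrow> real" where
  "frob_inner M N = (\<Sum>a<dim_row M. \<Sum>b<dim_col M. M $$ (a,b) * N $$ (a,b))"

lemma frob_squared: "(frob M)\<^sup>2 = frob_inner M M"
  unfolding frob_def frob_inner_def by (simp add: power2_eq_square[symmetric] sum_nonneg)

lemma frob_transpose: "frob (transpose_mat M) = frob M"
proof -
  have "(\<Sum>a<dim_col M. \<Sum>b<dim_row M. (transpose_mat M $$ (a,b))\<^sup>2)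
      = (\<Sum>a<dim_col M. \<Sum>b<dim_row M. (M $$ (b,a))\<^sup>2)"
    by (intro sum.cong) auto
  then show ?thesis
    unfolding frob_def by (simp add: sum.swap[of _ "{..<dim_col M}" "{..<dim_row M}"])
qed

lemma frob_inner_mult_left:
  assumes A: "A \<in> carrier_mat k m" and N: "N \<in> carrier_mat m n" and M: "M \<in> carrier_mat k n"
  shows "frob_inner M (A * N) = frob_inner (transpose_mat A * M) N"
proof -
  have "frob_inner M (A * N) = (\<Sum>a<k. \<Sum>b<n. \<Sum>c<m. M $$ (a,b) * A $$ (a,c) * N $$ (c,b))"
    unfolding frob_inner_def using A N M
    by (auto simp: index_mult_mat_sum[OF A N] sum_distrib_left mult.assoc
        simp del: index_mult_mat(1) intro!: sum.cong)
  also have "\<dots> = (\<Sum>b<n. \<Sum>c<m. \<Sum>a<k. M $$ (a,b) * A $$ (a,c) * N $$ (c,b))"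
    by (subst sum.swap) (rule sum.cong[OF refl], rule sum.swap)
  also have "\<dots> = (\<Sum>c<m. \<Sum>b<n. \<Sum>a<k. M $$ (a,b) * A $$ (a,c) * N $$ (c,b))"
    by (rule sum.swap)
  also have "\<dots> = frob_inner (transpose_mat A * M) N"
    unfolding frob_inner_def using A N M
    by (auto simp: index_mult_mat_sum[of "transpose_mat A" m k M n] sum_distrib_right
        sum_distrib_left mult.commute mult.left_commute simp del: index_mult_mat(1) intro!: sum.cong)
  finally show ?thesis .
qed

lemma frob_inner_mult_right:
  assumes N: "N \<in> carrier_mat m n" and B: "B \<in> carrier_mat n l" and M: "M \<in> carrier_mat m l"
  shows "frob_inner M (N * B) = frob_inner (M * transpose_mat B) N"
proof -
  have "frob_inner M (N * B) = (\<Sum>a<m. \<Sum>b<l. \<Sum>c<n. M $$ (a,b) * N $$ (a,c) * B $$ (c,b))"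
    unfolding frob_inner_def using B N M
    by (auto simp: index_mult_mat_sum[OF N B] sum_distrib_left mult.assoc
        simp del: index_mult_mat(1) intro!: sum.cong)
  also have "\<dots> = (\<Sum>a<m. \<Sum>c<n. \<Sum>b<l. M $$ (a,b) * N $$ (a,c) * B $$ (c,b))"
    by (rule sum.cong[OF refl], rule sum.swap)
  also have "\<dots> = frob_inner (M * transpose_mat B) N"
    unfolding frob_inner_def using B N M
    by (auto simp: index_mult_mat_sum[of M m l "transpose_mat B" n] sum_distrib_right
        sum_distrib_left mult.commute mult.left_commute simp del: index_mult_mat(1) intro!: sum.cong)
  finally show ?thesis .
qed

lemma frob_inner_commute:
  "M \<in> carrier_mat p q \<Longrightarrow> N \<in> carrier_mat p q \<Longrightarrow> frob_inner M N = frob_inner N M"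
  unfolding frob_inner_def by (auto simp: mult.commute)

lemma frob_inner_add_left:
  "M \<in> carrier_mat p q \<Longrightarrow> N \<in> carrier_mat p q \<Longrightarrow>
    frob_inner (M + N) K = frob_inner M K + frob_inner N K"
  unfolding frob_inner_def by (auto simp: algebra_simps sum.distrib)

lemma frob_inner_diff_left:
  "M \<in> carrier_mat p q \<Longrightarrow> N \<in> carrier_mat p q \<Longrightarrow>
    frob_inner (M - N) K = frob_inner M K - frob_inner N K"
  unfolding frob_inner_def by (auto simp: algebra_simps sum_subtractf)

lemma frob_inner_diff_right:
  "M \<in> carrier_mat p q \<Longrightarrow> N \<in> carrier_mat p q \<Longrightarrow> K \<in> carrier_mat p q \<Longrightarrow>
    frob_inner K (M - N) = frob_inner K M - frob_inner K N"
  unfolding frob_inner_def by (auto simp: algebra_simps sum_subtractf)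

lemma frob_inner_diff_self:
  "M \<in> carrier_mat p q \<Longrightarrow> N \<in> carrier_mat p q \<Longrightarrow>
    frob_inner (M - N) (M - N) = frob_inner M M - 2 * frob_inner M N + frob_inner N N"
  by (simp add: frob_inner_diff_left frob_inner_diff_right frob_inner_commute[of N p q M])

lemma msum_carrier [simp]: "msum d1 d2 N f \<in> carrier_mat d1 d2"
  unfolding msum_def by auto

lemma msum_dims [simp]: "dim_row (msum d1 d2 N f) = d1" "dim_col (msum d1 d2 N f) = d2"
  unfolding msum_def by auto

lemma index_msum [simp]:
  "a < d1 \<Longrightarrow> b < d2 \<Longrightarrow> msum d1 d2 N f $$ (a,b) = (\<Sum>i<N. f i $$ (a,b))"
  unfolding msum_def by auto

lemma msum_cong: "(\<And>i. i < N \<Longrightarrow> f i = g i) \<Longrightarrow> msum d1 d2 N f = msum d1 d2 N g"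
  unfolding msum_def by auto

lemma frob_inner_msum_left:
  assumes "\<And>i. i < N \<Longrightarrow> f i \<in> carrier_mat d1 d2"
  shows "frob_inner (msum d1 d2 N f) K = (\<Sum>i<N. frob_inner (f i) K)"
proof -
  have "frob_inner (msum d1 d2 N f) K = (\<Sum>a<d1. \<Sum>b<d2. \<Sum>i<N. f i $$ (a,b) * K $$ (a,b))"
    unfolding frob_inner_def by (auto simp: sum_distrib_right)
  also have "\<dots> = (\<Sum>a<d1. \<Sum>i<N. \<Sum>b<d2. f i $$ (a,b) * K $$ (a,b))"
    by (rule sum.cong[OF refl], rule sum.swap)
  also have "\<dots> = (\<Sum>i<N. \<Sum>a<d1. \<Sum>b<d2. f i $$ (a,b) * K $$ (a,b))"
    by (rule sum.swap)
  also have "\<dots> = (\<Sum>i<N. frob_inner (f i) K)"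
    unfolding frob_inner_def using assms by (auto intro!: sum.cong)
  finally show ?thesis .
qed

lemma msum_mult_right:
  assumes f: "\<And>i. i < N \<Longrightarrow> f i \<in> carrier_mat d1 d2" and C: "C \<in> carrier_mat d2 d3"
  shows "msum d1 d3 N (\<lambda>i. f i * C) = msum d1 d2 N f * C"
proof (rule eq_matI)
  fix a b assume "a < dim_row (msum d1 d2 N f * C)" and "b < dim_col (msum d1 d2 N f * C)"
  hence ab: "a < d1" "b < d3" using C by auto
  have "msum d1 d3 N (\<lambda>i. f i * C) $$ (a,b) = (\<Sum>i<N. \<Sum>k<d2. f i $$ (a,k) * C $$ (k,b))"
    using ab f C by (auto simp: index_mult_mat_sum[OF f C] simp del: index_mult_mat(1) intro!: sum.cong)
  also have "\<dots> = (\<Sum>k<d2. \<Sum>i<N. f i $$ (a,k) * C $$ (k,b))" by (rule sum.swap)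
  also have "\<dots> = (msum d1 d2 N f * C) $$ (a,b)"
    using ab C by (auto simp: index_mult_mat_sum[OF msum_carrier C] sum_distrib_right
        simp del: index_mult_mat(1))
  finally show "msum d1 d3 N (\<lambda>i. f i * C) $$ (a,b) = (msum d1 d2 N f * C) $$ (a,b)" .
qed (use C in auto)

lemma msum_mult_left:
  assumes f: "\<And>i. i < N \<Longrightarrow> f i \<in> carrier_mat d1 d2" and C: "C \<in> carrier_mat d0 d1"
  shows "msum d0 d2 N (\<lambda>i. C * f i) = C * msum d1 d2 N f"
proof (rule eq_matI)
  fix a b assume "a < dim_row (C * msum d1 d2 N f)" and "b < dim_col (C * msum d1 d2 N f)"
  hence ab: "a < d0" "b < d2" using C by auto
  have "msum d0 d2 N (\<lambda>i. C * f i) $$ (a,b) = (\<Sum>i<N. \<Sum>k<d1. C $$ (a,k) * f i $$ (k,b))"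
    using ab f C by (auto simp: index_mult_mat_sum[OF C f] simp del: index_mult_mat(1) intro!: sum.cong)
  also have "\<dots> = (\<Sum>k<d1. \<Sum>i<N. C $$ (a,k) * f i $$ (k,b))" by (rule sum.swap)
  also have "\<dots> = (C * msum d1 d2 N f) $$ (a,b)"
    using ab C by (auto simp: index_mult_mat_sum[OF C msum_carrier] sum_distrib_left
        simp del: index_mult_mat(1))
  finally show "msum d0 d2 N (\<lambda>i. C * f i) $$ (a,b) = (C * msum d1 d2 N f) $$ (a,b)" .
qed (use C in auto)

lemma msum_transpose:
  assumes "\<And>i. i < N \<Longrightarrow> f i \<in> carrier_mat d1 d2"
  shows "msum d2 d1 N (\<lambda>i. transpose_mat (f i)) = transpose_mat (msum d1 d2 N f)"
proof (rule eq_matI)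
  fix a b assume ab: "a < dim_row (transpose_mat (msum d1 d2 N f))" "b < dim_col (transpose_mat (msum d1 d2 N f))"
  have "(\<Sum>i<N. transpose_mat (f i) $$ (a,b)) = (\<Sum>i<N. f i $$ (b,a))"
  proof (intro sum.cong refl)
    fix i assume "i \<in> {..<N}"
    then have "f i \<in> carrier_mat d1 d2" using assms by auto
    then show "transpose_mat (f i) $$ (a,b) = f i $$ (b,a)" using ab by auto
  qed
  then show "msum d2 d1 N (\<lambda>i. transpose_mat (f i)) $$ (a,b) = transpose_mat (msum d1 d2 N f) $$ (a,b)"
    using ab by auto
qed auto

lemma nonneg_mat_mult:
  assumes "nonneg_mat A" "nonneg_mat B" "A \<in> carrier_mat p q" "B \<in> carrier_mat q r"
  shows "nonneg_mat (A * B)"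
  using assms unfolding nonneg_mat_def
  by (auto simp: index_mult_mat_sum[OF assms(3,4)] simp del: index_mult_mat(1) intro!: sum_nonneg)

lemma nonneg_mat_transpose: "nonneg_mat A \<Longrightarrow> nonneg_mat (transpose_mat A)"
  unfolding nonneg_mat_def by auto

lemma nonneg_mat_add:
  "nonneg_mat M \<Longrightarrow> nonneg_mat N \<Longrightarrow> N \<in> carrier_mat (dim_row M) (dim_col M) \<Longrightarrow>
    nonneg_mat (M + N)"
  unfolding nonneg_mat_def by auto

lemma nonneg_mat_one: "nonneg_mat (1\<^sub>m n)"
  unfolding nonneg_mat_def by auto

lemma multiplicative_update_descent:
  fixes G :: "real mat \<Rightarrow> real" and H :: "real mat \<Rightarrow> real mat"
  assumes U: "U \<in> carrier_mat d1 d2" and N: "N \<in> carrier_mat d1 d2" and D: "D \<in> carrier_mat d1 d2"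
    and nnU: "nonneg_mat U" and nnN: "nonneg_mat N" and posD: "pos_mat D"
    and expand: "\<And>\<Delta>. \<Delta> \<in> carrier_mat d1 d2 \<Longrightarrow>
      G (U + \<Delta>) = G U + frob_inner (D - N) \<Delta> + 1/2 * frob_inner (H \<Delta>) \<Delta>"
    and bound: "\<And>X w. X \<in> carrier_mat d1 d2 \<Longrightarrow>
      (\<And>a b. a < d1 \<Longrightarrow> b < d2 \<Longrightarrow> X $$ (a,b) = U $$ (a,b) * w a b) \<Longrightarrow>
      frob_inner (H X) X \<le> (\<Sum>a<d1. \<Sum>b<d2. D $$ (a,b) * U $$ (a,b) * (w a b)\<^sup>2)"
  shows "nonneg_mat (hadamard U (hdiv N D)) \<and> G (hadamard U (hdiv N D)) \<le> G U"
proof -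
  define U' where "U' = hadamard U (hdiv N D)"
  define w where "w a b = N $$ (a,b) / D $$ (a,b) - 1" for a b
  define \<Delta> where "\<Delta> = U' - U"
  define S where "S = (\<Sum>a<d1. \<Sum>b<d2. D $$ (a,b) * U $$ (a,b) * (w a b)\<^sup>2)"
  have U': "U' \<in> carrier_mat d1 d2" unfolding U'_def hadamard_def using U by auto
  have U'_entry: "U' $$ (a,b) = U $$ (a,b) * (N $$ (a,b) / D $$ (a,b))" if "a < d1" "b < d2" for a b
    unfolding U'_def hadamard_def hdiv_def using that U N by auto
  have D_pos: "D $$ (a,b) > 0" and U_nn: "U $$ (a,b) \<ge> 0" and N_nn: "N $$ (a,b) \<ge> 0"
    if "a < d1" "b < d2" for a b
    using posD nnU nnN that D U N unfolding pos_mat_def nonneg_mat_def by auto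
  have nnU': "nonneg_mat U'" unfolding nonneg_mat_def using U'
    by (auto simp: U'_entry U_nn N_nn D_pos less_imp_le)
  have \<Delta>: "\<Delta> \<in> carrier_mat d1 d2" unfolding \<Delta>_def using U U' by auto
  have \<Delta>_entry: "\<Delta> $$ (a,b) = U $$ (a,b) * w a b" if "a < d1" "b < d2" for a b
    unfolding \<Delta>_def w_def using that U U' by (auto simp: U'_entry algebra_simps)
  have "U + \<Delta> = U'" unfolding \<Delta>_def by (rule eq_matI) (use U U' in auto)
  then have "G U' = G U + frob_inner (D - N) \<Delta> + 1/2 * frob_inner (H \<Delta>) \<Delta>"
    using expand[OF \<Delta>] by simp
  moreover have "frob_inner (D - N) \<Delta> = - S"
    \<comment> \<open>entrywise \<open>(D - N) U w = - D U w\<^sup>2\<close>, because \<open>N = D (w + 1)\<close>\<close>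
    unfolding frob_inner_def S_def using D N
    by (auto simp: \<Delta>_entry w_def power2_eq_square field_simps less_imp_neq[OF D_pos, symmetric]
        sum_negf[symmetric] intro!: sum.cong)
  moreover have "frob_inner (H \<Delta>) \<Delta> \<le> S"
    unfolding S_def by (rule bound[OF \<Delta> \<Delta>_entry])
  moreover have "0 \<le> S"
    unfolding S_def using D_pos U_nn by (intro sum_nonneg mult_nonneg_nonneg) (auto intro: less_imp_le)
  ultimately show ?thesis using nnU' unfolding U'_def by linarith
qed

lemma quadratic_form_le_row_sums:
  fixes T :: "'a \<Rightarrow> 'a \<Rightarrow> real"
  assumes nonneg: "\<And>e f. e \<in> S \<Longrightarrow> f \<in> S \<Longrightarrow> T e f \<ge> 0"
    and sym: "\<And>e f. e \<in> S \<Longrightarrow> f \<in> S \<Longrightarrow> T e f = T f e"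
  shows "(\<Sum>e\<in>S. \<Sum>f\<in>S. T e f * x f * x e) \<le> (\<Sum>e\<in>S. \<Sum>f\<in>S. T e f * (x e)\<^sup>2)"
proof -
  have "(\<Sum>e\<in>S. \<Sum>f\<in>S. T e f * x f * x e) \<le> (\<Sum>e\<in>S. \<Sum>f\<in>S. T e f * ((x e)\<^sup>2 + (x f)\<^sup>2) / 2)"
  proof (intro sum_mono)
    fix e f assume "e \<in> S" "f \<in> S"
    moreover have "x f * x e \<le> ((x e)\<^sup>2 + (x f)\<^sup>2) / 2"
      using sum_squares_bound[of "x e" "x f"] by (simp add: mult_ac)
    ultimately show "T e f * x f * x e \<le> T e f * ((x e)\<^sup>2 + (x f)\<^sup>2) / 2"
      using mult_left_mono nonneg by (metis mult.assoc times_divide_eq_right)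
  qed
  also have "\<dots> = ((\<Sum>e\<in>S. \<Sum>f\<in>S. T e f * (x e)\<^sup>2) + (\<Sum>e\<in>S. \<Sum>f\<in>S. T e f * (x f)\<^sup>2)) / 2"
    by (simp add: distrib_left add_divide_distrib sum.distrib sum_divide_distrib[symmetric])
  also have "(\<Sum>e\<in>S. \<Sum>f\<in>S. T e f * (x f)\<^sup>2) = (\<Sum>e\<in>S. \<Sum>f\<in>S. T e f * (x e)\<^sup>2)"
    by (subst sum.swap) (use sym in \<open>auto intro!: sum.cong\<close>)
  finally show ?thesis by simp
qed

lemma index_sandwich_mat:
  assumes P: "P \<in> carrier_mat d1 d1" and W: "W \<in> carrier_mat d2 d2" and X: "X \<in> carrier_mat d1 d2"
    and "a < d1" "b < d2"
  shows "(P * X * W) $$ (a,b) = (\<Sum>c<d1. \<Sum>d<d2. P $$ (a,c) * X $$ (c,d) * W $$ (d,b))"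
proof -
  have "(P * X * W) $$ (a,b) = (\<Sum>d<d2. (\<Sum>c<d1. P $$ (a,c) * X $$ (c,d)) * W $$ (d,b))"
    using assms by (auto simp: index_mult_mat_sum[of _ d1 d2 W d2] index_mult_mat_sum[OF P]
        simp del: index_mult_mat(1) assoc_mult_mat intro!: sum.cong)
  also have "\<dots> = (\<Sum>c<d1. \<Sum>d<d2. P $$ (a,c) * X $$ (c,d) * W $$ (d,b))"
    by (simp add: sum_distrib_right sum.swap[of _ "{..<d2}" "{..<d1}"])
  finally show ?thesis .
qed

lemma frob_inner_sandwich_le:
  assumes P: "P \<in> carrier_mat d1 d1" and W: "W \<in> carrier_mat d2 d2"
    and U: "U \<in> carrier_mat d1 d2" and X: "X \<in> carrier_mat d1 d2"
    and symP: "transpose_mat P = P" and symW: "transpose_mat W = W"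
    and nnP: "nonneg_mat P" and nnW: "nonneg_mat W" and nnU: "nonneg_mat U"
    and X_entry: "\<And>a b. a < d1 \<Longrightarrow> b < d2 \<Longrightarrow> X $$ (a,b) = U $$ (a,b) * w a b"
  shows "frob_inner (P * X * W) X \<le> (\<Sum>a<d1. \<Sum>b<d2. (P * U * W) $$ (a,b) * U $$ (a,b) * (w a b)\<^sup>2)"
proof -
  let ?I = "{..<d1} \<times> {..<d2}"
  define T where "T a b c d = P $$ (a,c) * W $$ (d,b) * U $$ (c,d) * U $$ (a,b)" for a b c d
  have pairs: "(\<Sum>a<d1. \<Sum>b<d2. \<Sum>c<d1. \<Sum>d<d2. g a b c d)
      = (\<Sum>e\<in>?I. \<Sum>f\<in>?I. g (fst e) (snd e) (fst f) (snd f))" for g :: "nat \<Rightarrow> nat \<Rightarrow> nat \<Rightarrow> nat \<Rightarrow> real"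
  proof -
    have split: "(\<Sum>e\<in>A \<times> B. h e) = (\<Sum>a\<in>A. \<Sum>b\<in>B. h (a,b))" for A B and h :: "_ \<Rightarrow> real"
      by (simp add: sum.cartesian_product)
    show ?thesis by (simp add: split)
  qed
  have P_sym: "P $$ (a,c) = P $$ (c,a)" if "a < d1" "c < d1" for a c
    using that P by (metis symP carrier_matD index_transpose_mat(1))
  have W_sym: "W $$ (b,d) = W $$ (d,b)" if "b < d2" "d < d2" for b d
    using that W by (metis symW carrier_matD index_transpose_mat(1))
  have "frob_inner (P * X * W) X = (\<Sum>a<d1. \<Sum>b<d2. \<Sum>c<d1. \<Sum>d<d2. T a b c d * w c d * w a b)"
    unfolding frob_inner_def using P W X
    by (auto simp: index_sandwich_mat[OF P W X] X_entry T_def sum_distrib_right sum_distrib_left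
        mult_ac simp del: index_mult_mat(1) assoc_mult_mat intro!: sum.cong)
  also have "\<dots> \<le> (\<Sum>a<d1. \<Sum>b<d2. \<Sum>c<d1. \<Sum>d<d2. T a b c d * (w a b)\<^sup>2)"
    unfolding pairs
  proof (rule quadratic_form_le_row_sums)
    fix e f assume "e \<in> ?I" "f \<in> ?I"
    then show "0 \<le> T (fst e) (snd e) (fst f) (snd f)"
      and "T (fst e) (snd e) (fst f) (snd f) = T (fst f) (snd f) (fst e) (snd e)"
      using nnP nnW nnU P W U P_sym W_sym unfolding T_def nonneg_mat_def by auto
  qed
  also have "\<dots> = (\<Sum>a<d1. \<Sum>b<d2. (P * U * W) $$ (a,b) * U $$ (a,b) * (w a b)\<^sup>2)"
    using P W U
    by (auto simp: index_sandwich_mat[OF P W U] T_def sum_distrib_right sum_distrib_left mult_ac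
        simp del: index_mult_mat(1) assoc_mult_mat intro!: sum.cong)
  finally show ?thesis .
qed

lemma frob_inner_two_sided_le:
  assumes P: "P \<in> carrier_mat d1 d1" and W: "W \<in> carrier_mat d2 d2" and R: "R \<in> carrier_mat d2 d2"
    and U: "U \<in> carrier_mat d1 d2" and X: "X \<in> carrier_mat d1 d2"
    and sym: "transpose_mat P = P" "transpose_mat W = W" "transpose_mat R = R"
    and nn: "nonneg_mat P" "nonneg_mat W" "nonneg_mat R" "nonneg_mat U"
    and X_entry: "\<And>a b. a < d1 \<Longrightarrow> b < d2 \<Longrightarrow> X $$ (a,b) = U $$ (a,b) * w a b"
  shows "frob_inner (P * X * W + X * R) X
    \<le> (\<Sum>a<d1. \<Sum>b<d2. (P * U * W + U * R) $$ (a,b) * U $$ (a,b) * (w a b)\<^sup>2)"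
proof -
  have "frob_inner (P * X * W + X * R) X = frob_inner (P * X * W) X + frob_inner (1\<^sub>m d1 * X * R) X"
    using P W R X by (simp add: frob_inner_add_left[of _ d1 d2])
  also have "\<dots> \<le> (\<Sum>a<d1. \<Sum>b<d2. (P * U * W) $$ (a,b) * U $$ (a,b) * (w a b)\<^sup>2)
      + (\<Sum>a<d1. \<Sum>b<d2. (1\<^sub>m d1 * U * R) $$ (a,b) * U $$ (a,b) * (w a b)\<^sup>2)"
    by (intro add_mono frob_inner_sandwich_le[OF _ _ U X] one_carrier_mat nonneg_mat_one)
      (use assms in auto)
  also have "\<dots> = (\<Sum>a<d1. \<Sum>b<d2. (P * U * W + U * R) $$ (a,b) * U $$ (a,b) * (w a b)\<^sup>2)"
    using P W R U by (simp add: sum.distrib[symmetric] algebra_simps)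
  finally show ?thesis .
qed

lemma frob_left_residual_shift:
  fixes A X U \<Delta> V :: "real mat"
  assumes A: "A \<in> carrier_mat k m" and X: "X \<in> carrier_mat m n"
    and U: "U \<in> carrier_mat m r" and \<Delta>: "\<Delta> \<in> carrier_mat m r" and V: "V \<in> carrier_mat n r"
  shows "(frob (A * (X - (U + \<Delta>) * transpose_mat V)))\<^sup>2 = (frob (A * (X - U * transpose_mat V)))\<^sup>2
    + 2 * (frob_inner (transpose_mat A * A * U * transpose_mat V * V) \<Delta>
         - frob_inner (transpose_mat A * A * X * V) \<Delta>)
    + frob_inner (transpose_mat A * A * \<Delta> * transpose_mat V * V) \<Delta>"
proof -
  define R where "R = A * (X - U * transpose_mat V)"
  define S where "S = A * (\<Delta> * transpose_mat V)"
  have R: "R \<in> carrier_mat k n" and S: "S \<in> carrier_mat k n"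
    unfolding R_def S_def using assms by auto
  have split: "A * (X - (U + \<Delta>) * transpose_mat V) = R - S"
    unfolding R_def S_def using assms by (simp add: mat_ring_simps)
  have adjoint: "frob_inner M S = frob_inner (transpose_mat A * M * V) \<Delta>" if "M \<in> carrier_mat k n" for M
  proof -
    have "frob_inner M S = frob_inner (transpose_mat A * M) (\<Delta> * transpose_mat V)"
      unfolding S_def by (rule frob_inner_mult_left) (use assms that in auto)
    also have "\<dots> = frob_inner (transpose_mat A * M * V) \<Delta>"
      by (subst frob_inner_mult_right[of \<Delta> m r _ n]) (use assms that in auto)
    finally show ?thesis .
  qed
  have "transpose_mat A * R * V = transpose_mat A * A * X * V - transpose_mat A * A * U * transpose_mat V * V"
    unfolding R_def using assms by (simp add: mat_ring_simps)
  then have cross: "frob_inner R S = frob_inner (transpose_mat A * A * X * V) \<Delta>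
      - frob_inner (transpose_mat A * A * U * transpose_mat V * V) \<Delta>"
    by (simp only: adjoint[OF R]) (rule frob_inner_diff_left[of _ m r]; use assms in auto)
  have "transpose_mat A * S * V = transpose_mat A * A * \<Delta> * transpose_mat V * V"
    unfolding S_def using assms by (simp add: mat_ring_simps)
  then have quad: "frob_inner S S = frob_inner (transpose_mat A * A * \<Delta> * transpose_mat V * V) \<Delta>"
    by (simp only: adjoint[OF S])
  show ?thesis
    unfolding split frob_squared frob_inner_diff_self[OF R S] cross quad R_def[symmetric] by simp
qed

lemma frob_right_residual_shift:
  fixes X U \<Delta> V B :: "real mat"
  assumes X: "X \<in> carrier_mat m n" and B: "B \<in> carrier_mat n l"
    and U: "U \<in> carrier_mat m r" and \<Delta>: "\<Delta> \<in> carrier_mat m r" and V: "V \<in> carrier_mat n r"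
  shows "(frob ((X - (U + \<Delta>) * transpose_mat V) * B))\<^sup>2 = (frob ((X - U * transpose_mat V) * B))\<^sup>2
    + 2 * (frob_inner (U * transpose_mat V * B * transpose_mat B * V) \<Delta>
         - frob_inner (X * B * transpose_mat B * V) \<Delta>)
    + frob_inner (\<Delta> * transpose_mat V * B * transpose_mat B * V) \<Delta>"
proof -
  define R where "R = (X - U * transpose_mat V) * B"
  define S where "S = \<Delta> * transpose_mat V * B"
  have R: "R \<in> carrier_mat m l" and S: "S \<in> carrier_mat m l"
    unfolding R_def S_def using assms by auto
  have split: "(X - (U + \<Delta>) * transpose_mat V) * B = R - S"
    unfolding R_def S_def using assms by (simp add: mat_ring_simps)
  have adjoint: "frob_inner M S = frob_inner (M * transpose_mat B * V) \<Delta>" if "M \<in> carrier_mat m l" for M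
  proof -
    have "frob_inner M S = frob_inner (M * transpose_mat B) (\<Delta> * transpose_mat V)"
      unfolding S_def by (rule frob_inner_mult_right) (use assms that in auto)
    also have "\<dots> = frob_inner (M * transpose_mat B * V) \<Delta>"
      by (subst frob_inner_mult_right[of \<Delta> m r _ n]) (use assms that in auto)
    finally show ?thesis .
  qed
  have "R * transpose_mat B * V = X * B * transpose_mat B * V - U * transpose_mat V * B * transpose_mat B * V"
    unfolding R_def using assms by (simp add: mat_ring_simps)
  then have cross: "frob_inner R S = frob_inner (X * B * transpose_mat B * V) \<Delta>
      - frob_inner (U * transpose_mat V * B * transpose_mat B * V) \<Delta>"
    by (simp only: adjoint[OF R]) (rule frob_inner_diff_left[of _ m r]; use assms in auto)
  have "S * transpose_mat B * V = \<Delta> * transpose_mat V * B * transpose_mat B * V"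
    unfolding S_def by (rule refl)
  then have quad: "frob_inner S S = frob_inner (\<Delta> * transpose_mat V * B * transpose_mat B * V) \<Delta>"
    by (simp only: adjoint[OF S])
  show ?thesis
    unfolding split frob_squared frob_inner_diff_self[OF R S] cross quad R_def[symmetric] by simp
qed


lemma objF_shift_U:
  assumes XA: "\<And>i. i < s \<Longrightarrow> XA i \<in> carrier_mat m n"
    and XB: "\<And>j. j < t \<Longrightarrow> XB j \<in> carrier_mat m n"
    and A: "\<And>i. i < s \<Longrightarrow> A i \<in> carrier_mat (k i) m"
    and B: "\<And>j. j < t \<Longrightarrow> B j \<in> carrier_mat n (l j)"
    and U: "U \<in> carrier_mat m r" and \<Delta>: "\<Delta> \<in> carrier_mat m r" and V: "V \<in> carrier_mat n r"
  shows "objF s t XA XB A B (U + \<Delta>) V = objF s t XA XB A B U V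
    + frob_inner ((msum m r s (\<lambda>i. transpose_mat (A i) * A i * U * transpose_mat V * V)
                   + msum m r t (\<lambda>j. U * transpose_mat V * B j * transpose_mat (B j) * V))
                - (msum m r s (\<lambda>i. transpose_mat (A i) * A i * XA i * V)
                   + msum m r t (\<lambda>j. XB j * B j * transpose_mat (B j) * V))) \<Delta>
    + 1/2 * frob_inner (msum m r s (\<lambda>i. transpose_mat (A i) * A i * \<Delta> * transpose_mat V * V)
                      + msum m r t (\<lambda>j. \<Delta> * transpose_mat V * B j * transpose_mat (B j) * V)) \<Delta>"
proof -
  define DA NA HA where
    "DA i = transpose_mat (A i) * A i * U * transpose_mat V * V" and
    "NA i = transpose_mat (A i) * A i * XA i * V" and
    "HA i = transpose_mat (A i) * A i * \<Delta> * transpose_mat V * V" for i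
  define DB NB HB where
    "DB j = U * transpose_mat V * B j * transpose_mat (B j) * V" and
    "NB j = XB j * B j * transpose_mat (B j) * V" and
    "HB j = \<Delta> * transpose_mat V * B j * transpose_mat (B j) * V" for j
  have carrier_A: "DA i \<in> carrier_mat m r" "NA i \<in> carrier_mat m r" "HA i \<in> carrier_mat m r"
    if "i < s" for i
    using A[OF that] XA[OF that] U V \<Delta> unfolding DA_def NA_def HA_def by auto
  have carrier_B: "DB j \<in> carrier_mat m r" "NB j \<in> carrier_mat m r" "HB j \<in> carrier_mat m r"
    if "j < t" for j
    using B[OF that] XB[OF that] U V \<Delta> unfolding DB_def NB_def HB_def by auto
  have inner_msum_A: "frob_inner (msum m r s F) \<Delta> = (\<Sum>i<s. frob_inner (F i) \<Delta>)"
    if "F \<in> {DA, NA, HA}" for F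
    using that by (intro frob_inner_msum_left) (auto simp: carrier_A)
  have inner_msum_B: "frob_inner (msum m r t F) \<Delta> = (\<Sum>j<t. frob_inner (F j) \<Delta>)"
    if "F \<in> {DB, NB, HB}" for F
    using that by (intro frob_inner_msum_left) (auto simp: carrier_B)
  have left: "(\<Sum>i<s. (frob (A i * (XA i - (U + \<Delta>) * transpose_mat V)))\<^sup>2)
      = (\<Sum>i<s. (frob (A i * (XA i - U * transpose_mat V)))\<^sup>2)
        + 2 * (frob_inner (msum m r s DA) \<Delta> - frob_inner (msum m r s NA) \<Delta>)
        + frob_inner (msum m r s HA) \<Delta>"
  proof -
    have "(\<Sum>i<s. (frob (A i * (XA i - (U + \<Delta>) * transpose_mat V)))\<^sup>2)
        = (\<Sum>i<s. (frob (A i * (XA i - U * transpose_mat V)))\<^sup>2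
            + 2 * (frob_inner (DA i) \<Delta> - frob_inner (NA i) \<Delta>) + frob_inner (HA i) \<Delta>)"
      unfolding DA_def NA_def HA_def
      by (intro sum.cong refl frob_left_residual_shift) (use assms in auto)
    then show ?thesis by (simp add: inner_msum_A sum.distrib sum_subtractf sum_distrib_left)
  qed
  have right: "(\<Sum>j<t. (frob ((XB j - (U + \<Delta>) * transpose_mat V) * B j))\<^sup>2)
      = (\<Sum>j<t. (frob ((XB j - U * transpose_mat V) * B j))\<^sup>2)
        + 2 * (frob_inner (msum m r t DB) \<Delta> - frob_inner (msum m r t NB) \<Delta>)
        + frob_inner (msum m r t HB) \<Delta>"
  proof -
    have "(\<Sum>j<t. (frob ((XB j - (U + \<Delta>) * transpose_mat V) * B j))\<^sup>2)
        = (\<Sum>j<t. (frob ((XB j - U * transpose_mat V) * B j))\<^sup>2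
            + 2 * (frob_inner (DB j) \<Delta> - frob_inner (NB j) \<Delta>) + frob_inner (HB j) \<Delta>)"
      unfolding DB_def NB_def HB_def
      by (intro sum.cong refl frob_right_residual_shift) (use assms in auto)
    then show ?thesis by (simp add: inner_msum_B sum.distrib sum_subtractf sum_distrib_left)
  qed
  show ?thesis
    unfolding DA_def[symmetric] NA_def[symmetric] HA_def[symmetric]
      DB_def[symmetric] NB_def[symmetric] HB_def[symmetric]
    by (simp add: objF_def left right frob_inner_diff_left[of _ m r] frob_inner_add_left[of _ m r]
        algebra_simps)
qed


lemma msum_gram_products:
  assumes A: "\<And>i. i < s \<Longrightarrow> A i \<in> carrier_mat (k i) m"
    and B: "\<And>j. j < t \<Longrightarrow> B j \<in> carrier_mat n (l j)"
    and Y: "Y \<in> carrier_mat m r" and V: "V \<in> carrier_mat n r"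
  shows "msum m r s (\<lambda>i. transpose_mat (A i) * A i * Y * transpose_mat V * V)
      = msum m m s (\<lambda>i. transpose_mat (A i) * A i) * Y * (transpose_mat V * V)"
    and "msum m r t (\<lambda>j. Y * transpose_mat V * B j * transpose_mat (B j) * V)
      = Y * (transpose_mat V * msum n n t (\<lambda>j. B j * transpose_mat (B j)) * V)"
proof -
  note dims = A[THEN carrier_matD(1)] A[THEN carrier_matD(2)]
    B[THEN carrier_matD(1)] B[THEN carrier_matD(2)]
  have "msum m r s (\<lambda>i. transpose_mat (A i) * A i * Y * transpose_mat V * V)
      = msum m r s (\<lambda>i. transpose_mat (A i) * A i * (Y * (transpose_mat V * V)))"
    by (rule msum_cong) (use Y V in \<open>simp add: mat_ring_simps dims\<close>)
  also have "\<dots> = msum m m s (\<lambda>i. transpose_mat (A i) * A i) * (Y * (transpose_mat V * V))"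
    by (rule msum_mult_right) (use Y V in \<open>auto simp: dims\<close>)
  finally show "msum m r s (\<lambda>i. transpose_mat (A i) * A i * Y * transpose_mat V * V)
      = msum m m s (\<lambda>i. transpose_mat (A i) * A i) * Y * (transpose_mat V * V)"
    using Y V by (simp add: mat_ring_simps)
  have "msum m r t (\<lambda>j. Y * transpose_mat V * B j * transpose_mat (B j) * V)
      = msum m r t (\<lambda>j. Y * transpose_mat V * (B j * transpose_mat (B j) * V))"
    by (rule msum_cong) (use Y V in \<open>simp add: mat_ring_simps dims\<close>)
  also have "\<dots> = Y * transpose_mat V * msum n r t (\<lambda>j. B j * transpose_mat (B j) * V)"
    by (rule msum_mult_left) (use Y V in \<open>auto simp: dims\<close>)
  also have "msum n r t (\<lambda>j. B j * transpose_mat (B j) * V) = msum n n t (\<lambda>j. B j * transpose_mat (B j)) * V"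
    by (rule msum_mult_right) (use V in \<open>auto simp: dims\<close>)
  finally show "msum m r t (\<lambda>j. Y * transpose_mat V * B j * transpose_mat (B j) * V)
      = Y * (transpose_mat V * msum n n t (\<lambda>j. B j * transpose_mat (B j)) * V)"
    using Y V by (simp add: mat_ring_simps)
qed

lemma transpose_msum_gram:
  assumes A: "\<And>i. i < s \<Longrightarrow> A i \<in> carrier_mat (k i) m"
  shows "transpose_mat (msum m m s (\<lambda>i. transpose_mat (A i) * A i)) = msum m m s (\<lambda>i. transpose_mat (A i) * A i)"
proof -
  note dims = A[THEN carrier_matD(1)] A[THEN carrier_matD(2)]
  have "transpose_mat (msum m m s (\<lambda>i. transpose_mat (A i) * A i))
      = msum m m s (\<lambda>i. transpose_mat (transpose_mat (A i) * A i))"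
    by (rule msum_transpose[symmetric]) (auto simp: dims)
  also have "\<dots> = msum m m s (\<lambda>i. transpose_mat (A i) * A i)"
    by (rule msum_cong) (simp add: mat_ring_simps dims)
  finally show ?thesis .
qed


lemma objF_update_U_descent:
  fixes s t m n r :: nat and XA XB A B :: "nat \<Rightarrow> real mat" and k l :: "nat \<Rightarrow> nat"
    and U V :: "real mat"
  defines "N \<equiv> msum m r s (\<lambda>i. transpose_mat (A i) * A i * XA i * V)
                + msum m r t (\<lambda>j. XB j * B j * transpose_mat (B j) * V)"
    and "D \<equiv> msum m r s (\<lambda>i. transpose_mat (A i) * A i * U * transpose_mat V * V)
                + msum m r t (\<lambda>j. U * transpose_mat V * B j * transpose_mat (B j) * V)"
  assumes XA: "\<And>i. i < s \<Longrightarrow> XA i \<in> carrier_mat m n"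
    and XB: "\<And>j. j < t \<Longrightarrow> XB j \<in> carrier_mat m n"
    and A: "\<And>i. i < s \<Longrightarrow> A i \<in> carrier_mat (k i) m"
    and B: "\<And>j. j < t \<Longrightarrow> B j \<in> carrier_mat n (l j)"
    and U: "U \<in> carrier_mat m r" and V: "V \<in> carrier_mat n r"
    and nnU: "nonneg_mat U" and nnV: "nonneg_mat V"
    and nnAA: "nonneg_mat (msum m m s (\<lambda>i. transpose_mat (A i) * A i))"
    and nnBB: "nonneg_mat (msum n n t (\<lambda>j. B j * transpose_mat (B j)))"
    and nnAAX: "nonneg_mat (msum m n s (\<lambda>i. transpose_mat (A i) * A i * XA i))"
    and nnXBB: "nonneg_mat (msum m n t (\<lambda>j. XB j * B j * transpose_mat (B j)))"
    and posD: "pos_mat D"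
  shows "nonneg_mat (hadamard U (hdiv N D))
    \<and> objF s t XA XB A B (hadamard U (hdiv N D)) V \<le> objF s t XA XB A B U V"
proof -
  note dims = A[THEN carrier_matD(1)] A[THEN carrier_matD(2)] B[THEN carrier_matD(1)]
    B[THEN carrier_matD(2)] XA[THEN carrier_matD(1)] XA[THEN carrier_matD(2)]
    XB[THEN carrier_matD(1)] XB[THEN carrier_matD(2)]
  define P where "P = msum m m s (\<lambda>i. transpose_mat (A i) * A i)"
  define Q where "Q = msum n n t (\<lambda>j. B j * transpose_mat (B j))"
  define W where "W = transpose_mat V * V"
  define R where "R = transpose_mat V * Q * V"
  have P: "P \<in> carrier_mat m m" and Q: "Q \<in> carrier_mat n n"
    and W: "W \<in> carrier_mat r r" and R: "R \<in> carrier_mat r r"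
    unfolding P_def Q_def W_def R_def using V by auto
  have symP: "transpose_mat P = P"
    unfolding P_def by (rule transpose_msum_gram[OF A])
  have symQ: "transpose_mat Q = Q"
    using transpose_msum_gram[of t "\<lambda>j. transpose_mat (B j)" l n] B unfolding Q_def by simp
  have symW: "transpose_mat W = W" and symR: "transpose_mat R = R"
    unfolding W_def R_def using V Q symQ by (simp_all add: mat_ring_simps)
  have nnW: "nonneg_mat W" and nnR: "nonneg_mat R"
    unfolding W_def R_def using V Q nnV nnBB[folded Q_def]
    by (auto intro!: nonneg_mat_mult nonneg_mat_transpose)
  have H: "msum m r s (\<lambda>i. transpose_mat (A i) * A i * Y * transpose_mat V * V)
      + msum m r t (\<lambda>j. Y * transpose_mat V * B j * transpose_mat (B j) * V) = P * Y * W + Y * R"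
    if "Y \<in> carrier_mat m r" for Y
    unfolding P_def Q_def W_def R_def using msum_gram_products[OF A B that V] by simp
  have N_eq: "N = msum m n s (\<lambda>i. transpose_mat (A i) * A i * XA i) * V
      + msum m n t (\<lambda>j. XB j * B j * transpose_mat (B j)) * V"
    unfolding N_def by (subst (1 2) msum_mult_right[symmetric]) (use V in \<open>auto simp: dims\<close>)
  show ?thesis
  proof (rule multiplicative_update_descent[where H = "\<lambda>\<Delta>. P * \<Delta> * W + \<Delta> * R"])
    show "N \<in> carrier_mat m r" and "D \<in> carrier_mat m r"
      unfolding N_def D_def by auto
    show "nonneg_mat N"
      unfolding N_eq using V nnV nnAAX nnXBB by (auto intro!: nonneg_mat_add nonneg_mat_mult)
    show "objF s t XA XB A B (U + \<Delta>) V
        = objF s t XA XB A B U V + frob_inner (D - N) \<Delta> + 1/2 * frob_inner (P * \<Delta> * W + \<Delta> * R) \<Delta>"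
      if "\<Delta> \<in> carrier_mat m r" for \<Delta>
      unfolding D_def N_def H[OF that, symmetric] by (rule objF_shift_U[OF XA XB A B U that V])
    show "frob_inner (P * X * W + X * R) X \<le> (\<Sum>a<m. \<Sum>b<r. D $$ (a,b) * U $$ (a,b) * (w a b)\<^sup>2)"
      if "X \<in> carrier_mat m r" and "\<And>a b. a < m \<Longrightarrow> b < r \<Longrightarrow> X $$ (a,b) = U $$ (a,b) * w a b" for X w
      unfolding D_def H[OF U]
      by (rule frob_inner_two_sided_le[OF P W R U that(1) symP symW symR _ nnW nnR nnU that(2)])
        (simp add: P_def nnAA)
  qed (use U nnU posD in auto)
qed


lemma objF_transpose:
  assumes XA: "\<And>i. i < s \<Longrightarrow> XA i \<in> carrier_mat m n"
    and XB: "\<And>j. j < t \<Longrightarrow> XB j \<in> carrier_mat m n"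
    and A: "\<And>i. i < s \<Longrightarrow> A i \<in> carrier_mat (k i) m"
    and B: "\<And>j. j < t \<Longrightarrow> B j \<in> carrier_mat n (l j)"
    and U: "U \<in> carrier_mat m r" and V: "V \<in> carrier_mat n r"
  shows "objF t s (\<lambda>j. transpose_mat (XB j)) (\<lambda>i. transpose_mat (XA i))
      (\<lambda>j. transpose_mat (B j)) (\<lambda>i. transpose_mat (A i)) V U = objF s t XA XB A B U V"
proof -
  note dims = A[THEN carrier_matD(1)] A[THEN carrier_matD(2)] B[THEN carrier_matD(1)]
    B[THEN carrier_matD(2)] XA[THEN carrier_matD(1)] XA[THEN carrier_matD(2)]
    XB[THEN carrier_matD(1)] XB[THEN carrier_matD(2)]
  have "frob (transpose_mat (B j) * (transpose_mat (XB j) - V * transpose_mat U))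
      = frob ((XB j - U * transpose_mat V) * B j)" if "j < t" for j
    by (subst frob_transpose[symmetric]) (use U V that in \<open>simp add: mat_ring_simps dims\<close>)
  moreover have "frob ((transpose_mat (XA i) - V * transpose_mat U) * transpose_mat (A i))
      = frob (A i * (XA i - U * transpose_mat V))" if "i < s" for i
    by (subst frob_transpose[symmetric]) (use U V that in \<open>simp add: mat_ring_simps dims\<close>)
  ultimately show ?thesis
    unfolding objF_def by (simp add: add.commute)
qed

lemma objF_update_V_descent:
  fixes s t m n r :: nat and XA XB A B :: "nat \<Rightarrow> real mat" and k l :: "nat \<Rightarrow> nat"
    and U V :: "real mat"
  defines "N \<equiv> msum n r s (\<lambda>i. transpose_mat (XA i) * transpose_mat (A i) * A i * U)
                + msum n r t (\<lambda>j. B j * transpose_mat (B j) * transpose_mat (XB j) * U)"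
    and "D \<equiv> msum n r s (\<lambda>i. V * transpose_mat U * transpose_mat (A i) * A i * U)
                + msum n r t (\<lambda>j. B j * transpose_mat (B j) * V * transpose_mat U * U)"
  assumes XA: "\<And>i. i < s \<Longrightarrow> XA i \<in> carrier_mat m n"
    and XB: "\<And>j. j < t \<Longrightarrow> XB j \<in> carrier_mat m n"
    and A: "\<And>i. i < s \<Longrightarrow> A i \<in> carrier_mat (k i) m"
    and B: "\<And>j. j < t \<Longrightarrow> B j \<in> carrier_mat n (l j)"
    and U: "U \<in> carrier_mat m r" and V: "V \<in> carrier_mat n r"
    and nnU: "nonneg_mat U" and nnV: "nonneg_mat V"
    and nnAA: "nonneg_mat (msum m m s (\<lambda>i. transpose_mat (A i) * A i))"
    and nnBB: "nonneg_mat (msum n n t (\<lambda>j. B j * transpose_mat (B j)))"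
    and nnAAX: "nonneg_mat (msum m n s (\<lambda>i. transpose_mat (A i) * A i * XA i))"
    and nnXBB: "nonneg_mat (msum m n t (\<lambda>j. XB j * B j * transpose_mat (B j)))"
    and posD: "pos_mat D"
  shows "nonneg_mat (hadamard V (hdiv N D))
    \<and> objF s t XA XB A B U (hadamard V (hdiv N D)) \<le> objF s t XA XB A B U V"
proof -
  note dims = A[THEN carrier_matD(1)] A[THEN carrier_matD(2)] B[THEN carrier_matD(1)]
    B[THEN carrier_matD(2)] XA[THEN carrier_matD(1)] XA[THEN carrier_matD(2)]
    XB[THEN carrier_matD(1)] XB[THEN carrier_matD(2)]
  have "msum n m s (\<lambda>i. transpose_mat (XA i) * transpose_mat (A i) * A i)
      = msum n m s (\<lambda>i. transpose_mat (transpose_mat (A i) * A i * XA i))"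
    by (rule msum_cong) (simp add: mat_ring_simps dims)
  also have "\<dots> = transpose_mat (msum m n s (\<lambda>i. transpose_mat (A i) * A i * XA i))"
    by (rule msum_transpose) (auto simp: dims)
  finally have nnXAA: "nonneg_mat (msum n m s (\<lambda>i. transpose_mat (XA i) * transpose_mat (A i) * A i))"
    using nnAAX by (simp add: nonneg_mat_transpose)
  have "msum n m t (\<lambda>j. B j * transpose_mat (B j) * transpose_mat (XB j))
      = msum n m t (\<lambda>j. transpose_mat (XB j * B j * transpose_mat (B j)))"
    by (rule msum_cong) (simp add: mat_ring_simps dims)
  also have "\<dots> = transpose_mat (msum m n t (\<lambda>j. XB j * B j * transpose_mat (B j)))"
    by (rule msum_transpose) (auto simp: dims)
  finally have nnBBX: "nonneg_mat (msum n m t (\<lambda>j. B j * transpose_mat (B j) * transpose_mat (XB j)))"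
    using nnXBB by (simp add: nonneg_mat_transpose)
  have swapN: "msum n r t (\<lambda>j. B j * transpose_mat (B j) * transpose_mat (XB j) * U)
      + msum n r s (\<lambda>i. transpose_mat (XA i) * transpose_mat (A i) * A i * U) = N"
    unfolding N_def by (rule comm_add_mat) auto
  have swapD: "msum n r t (\<lambda>j. B j * transpose_mat (B j) * V * transpose_mat U * U)
      + msum n r s (\<lambda>i. V * transpose_mat U * transpose_mat (A i) * A i * U) = D"
    unfolding D_def by (rule comm_add_mat) auto
  have "nonneg_mat (hadamard V (hdiv N D)) \<and>
      objF t s (\<lambda>j. transpose_mat (XB j)) (\<lambda>i. transpose_mat (XA i)) (\<lambda>j. transpose_mat (B j))
        (\<lambda>i. transpose_mat (A i)) (hadamard V (hdiv N D)) U
      \<le> objF t s (\<lambda>j. transpose_mat (XB j)) (\<lambda>i. transpose_mat (XA i)) (\<lambda>j. transpose_mat (B j))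
        (\<lambda>i. transpose_mat (A i)) V U"
    using objF_update_U_descent[of t "\<lambda>j. transpose_mat (XB j)" n m s "\<lambda>i. transpose_mat (XA i)"
        "\<lambda>j. transpose_mat (B j)" l "\<lambda>i. transpose_mat (A i)" k V r U]
      XA XB A B U V nnU nnV nnAA nnBB nnXAA nnBBX posD
    by (simp add: swapN swapD)
  moreover have "hadamard V (hdiv N D) \<in> carrier_mat n r"
    using V unfolding hadamard_def by auto
  ultimately show ?thesis
    using objF_transpose[OF XA XB A B U] objF_transpose[OF XA XB A B U V] by simp
qed

theorem mainTheorem7:
  fixes s t m n r :: nat
    and XA XB A B :: "nat \<Rightarrow> real mat"
    and k l :: "nat \<Rightarrow> nat"
    and U V :: "real mat"
  assumes XA: "\<And>i. i < s \<Longrightarrow> XA i \<in> carrier_mat m n"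
    and XB: "\<And>j. j < t \<Longrightarrow> XB j \<in> carrier_mat m n"
    and A: "\<And>i. i < s \<Longrightarrow> A i \<in> carrier_mat (k i) m"
    and B: "\<And>j. j < t \<Longrightarrow> B j \<in> carrier_mat n (l j)"
    and U: "U \<in> carrier_mat m r"
    and V: "V \<in> carrier_mat n r"
    and nnU: "nonneg_mat U"
    and nnV: "nonneg_mat V"
    and nnAA: "nonneg_mat (msum m m s (\<lambda>i. transpose_mat (A i) * A i))"
    and nnBB: "nonneg_mat (msum n n t (\<lambda>j. B j * transpose_mat (B j)))"
    and nnAAX: "nonneg_mat (msum m n s (\<lambda>i. transpose_mat (A i) * A i * XA i))"
    and nnXBB: "nonneg_mat (msum m n t (\<lambda>j. XB j * B j * transpose_mat (B j)))"
    and posU: "pos_mat (msum m r s (\<lambda>i. transpose_mat (A i) * A i * U * transpose_mat V * V)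
                       + msum m r t (\<lambda>j. U * transpose_mat V * B j * transpose_mat (B j) * V))"
    and posV: "pos_mat (msum n r s (\<lambda>i. V * transpose_mat U * transpose_mat (A i) * A i * U)
                       + msum n r t (\<lambda>j. B j * transpose_mat (B j) * V * transpose_mat U * U))"
  shows "let U' = hadamard U (hdiv
                (msum m r s (\<lambda>i. transpose_mat (A i) * A i * XA i * V)
                 + msum m r t (\<lambda>j. XB j * B j * transpose_mat (B j) * V))
                (msum m r s (\<lambda>i. transpose_mat (A i) * A i * U * transpose_mat V * V)
                 + msum m r t (\<lambda>j. U * transpose_mat V * B j * transpose_mat (B j) * V)));
             V' = hadamard V (hdiv
                (msum n r s (\<lambda>i. transpose_mat (XA i) * transpose_mat (A i) * A i * U)
                 + msum n r t (\<lambda>j. B j * transpose_mat (B j) * transpose_mat (XB j) * U))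
                (msum n r s (\<lambda>i. V * transpose_mat U * transpose_mat (A i) * A i * U)
                 + msum n r t (\<lambda>j. B j * transpose_mat (B j) * V * transpose_mat U * U)))
         in nonneg_mat U' \<and> nonneg_mat V'
            \<and> objF s t XA XB A B U' V \<le> objF s t XA XB A B U V
            \<and> objF s t XA XB A B U V' \<le> objF s t XA XB A B U V"
  using objF_update_U_descent[OF XA XB A B U V nnU nnV nnAA nnBB nnAAX nnXBB posU]
    objF_update_V_descent[OF XA XB A B U V nnU nnV nnAA nnBB nnAAX nnXBB posV]
  unfolding Let_def by blast

end
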